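(* Let $\Omega=\{1,\dots,m\}^{\mathbb{N}}$ with shift $\sigma$, let $\mathcal{M}$ be the set of Borel probabilities on $\Omega$ with the Monge–Kantorovich metric $d_{MK}$, and let $\mathfrak{T}:\mathcal{M}\to\mathcal{M}$ be the push-forward map $\mathfrak{T}(\mu)(E)=\mu(\sigma^{-1}(E))$. Then there exists $\mu\in\mathcal{M}$ whose forward orbit $\{\mathfrak{T}^n(\mu):n\ge 0\}$ is dense in $\mathcal{M}$.
   Context: $\Omega$ carries the metric $d_\Omega(\alpha,\beta)=2^{-k}$ with $k=\min\{i:\alpha_i\neq\beta_i\}$ (and $0$ if $\alpha=\beta$); $d_{MK}(\mu,\nu)=\sup\{\int f\,d\mu-\int f\,d\nu : f \text{ 1-Lipschitz}\}$. $\sigma(x_1,x_2,\dots)=(x_2,x_3,\dots)$. *)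

theory Defs
  imports "HOL-Probability.Probability"
begin

definition Omega :: "nat \<Rightarrow> (nat \<Rightarrow> nat) set" where
  "Omega m = {x. \<forall>i. x i \<in> {1..m}}"

definition d_Omega :: "(nat \<Rightarrow> nat) \<Rightarrow> (nat \<Rightarrow> nat) \<Rightarrow> real" where
  "d_Omega x y = (if x = y then 0 else (1/2) ^ (LEAST i. x i \<noteq> y i))"

definition Omega_open :: "nat \<Rightarrow> (nat \<Rightarrow> nat) set \<Rightarrow> bool" where
  "Omega_open m U \<longleftrightarrow> U \<subseteq> Omega m \<and>
     (\<forall>x\<in>U. \<exists>e>0. \<forall>y\<in>Omega m. d_Omega x y < e \<longrightarrow> y \<in> U)"

definition Omega_borel :: "nat \<Rightarrow> (nat \<Rightarrow> nat) measure" where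
  "Omega_borel m = sigma (Omega m) {U. Omega_open m U}"

definition Prob_Omega :: "nat \<Rightarrow> (nat \<Rightarrow> nat) measure set" where
  "Prob_Omega m = {\<mu>. prob_space \<mu> \<and> sets \<mu> = sets (Omega_borel m)}"

definition shift :: "(nat \<Rightarrow> nat) \<Rightarrow> (nat \<Rightarrow> nat)" where
  "shift x = (\<lambda>i. x (Suc i))"

definition T_push :: "nat \<Rightarrow> (nat \<Rightarrow> nat) measure \<Rightarrow> (nat \<Rightarrow> nat) measure" where
  "T_push m \<mu> = distr \<mu> (Omega_borel m) shift"

definition lip1 :: "nat \<Rightarrow> ((nat \<Rightarrow> nat) \<Rightarrow> real) \<Rightarrow> bool" where
  "lip1 m f \<longleftrightarrow> (\<forall>x\<in>Omega m. \<forall>y\<in>Omega m. \<bar>f x - f y\<bar> \<le> d_Omega x y)"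

definition d_MK :: "nat \<Rightarrow> (nat \<Rightarrow> nat) measure \<Rightarrow> (nat \<Rightarrow> nat) measure \<Rightarrow> real" where
  "d_MK m \<mu> \<nu> = Sup {(\<integral>x. f x \<partial>\<mu>) - (\<integral>x. f x \<partial>\<nu>) | f. lip1 m f}"

end

theory Submission
  imports Defs "HOL-Library.Discrete_Functions"
begin

text \<open>
  Let \<open>\<mu>\<close> be the law of a random sequence built from independent blocks: positions
  \<open>2^k ..< 2^(k+1)\<close> carry a random word drawn from the \<open>k\<close>-th distribution of an enumeration of
  all finitely supported rational distributions on words, each listed infinitely often.
  Shifting by \<open>2^k\<close> brings block \<open>k\<close> to the front, so \<open>T^(2^k) \<mu>\<close> gives every cylinder of
  length \<open>L \<le> 2^k\<close> exactly the probability prescribed by that distribution.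
  A 1-Lipschitz function differs by at most \<open>2^-L\<close> from a function of the first \<open>L\<close> letters,
  hence \<open>d_MK(\<rho>, \<nu>)\<close> is at most \<open>2 * 2^-L\<close> plus the sum of \<open>|\<rho>[w] - \<nu>[w]|\<close> over the words
  \<open>w\<close> of length \<open>L\<close>; and rational distributions approximate the cylinder probabilities of any \<open>\<nu>\<close>.
\<close>

section \<open>The shift space and its Borel sets\<close>

lemma d_Omega_nonneg: "d_Omega x y \<ge> 0"
  by (simp add: d_Omega_def)

lemma d_Omega_le_if_agree:
  assumes "\<forall>i<L. x i = y i"
  shows "d_Omega x y \<le> (1/2) ^ L"
proof (cases "x = y")
  case False
  then obtain j where "x j \<noteq> y j" by auto
  then have "x (LEAST i. x i \<noteq> y i) \<noteq> y (LEAST i. x i \<noteq> y i)"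
    by (rule LeastI)
  then have "L \<le> (LEAST i. x i \<noteq> y i)"
    using assms by (meson not_le)
  then show ?thesis
    using False by (simp add: d_Omega_def power_decreasing)
qed (simp add: d_Omega_def)

lemma d_Omega_le_1: "d_Omega x y \<le> 1"
  using d_Omega_le_if_agree[of 0 x y] by simp

lemma eq_if_d_Omega_less:
  assumes "d_Omega x y < (1/2) ^ j"
  shows "x j = y j"
proof (rule ccontr)
  assume "x j \<noteq> y j"
  then have "x \<noteq> y" and "(LEAST i. x i \<noteq> y i) \<le> j"
    by (auto intro: Least_le)
  then show False
    using assms by (simp add: d_Omega_def power_decreasing leD)
qed

lemma Omega_open_subset: "{U. Omega_open m U} \<subseteq> Pow (Omega m)"
  by (auto simp: Omega_open_def)

lemma space_Omega_borel [simp]: "space (Omega_borel m) = Omega m"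
  unfolding Omega_borel_def by (rule space_measure_of_conv)

lemma sets_Omega_borel: "sets (Omega_borel m) = sigma_sets (Omega m) {U. Omega_open m U}"
  unfolding Omega_borel_def using Omega_open_subset by (rule sets_measure_of)

lemma coordinate_set_in_sets: "{x \<in> Omega m. x j = a} \<in> sets (Omega_borel m)"
proof -
  have "Omega_open m {x \<in> Omega m. x j = a}"
    unfolding Omega_open_def
  proof (intro conjI ballI)
    fix x assume "x \<in> {x \<in> Omega m. x j = a}"
    then show "\<exists>e>0. \<forall>y\<in>Omega m. d_Omega x y < e \<longrightarrow> y \<in> {x \<in> Omega m. x j = a}"
      using eq_if_d_Omega_less[of x _ j] by (intro exI[of _ "(1/2) ^ j"]) auto
  qed auto
  then show ?thesis
    unfolding sets_Omega_borel by auto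
qed

definition cylinder :: "nat \<Rightarrow> nat list \<Rightarrow> (nat \<Rightarrow> nat) set" where
  "cylinder m w = {x \<in> Omega m. map x [0..<length w] = w}"

lemma map_upt_length_eq_iff: "map x [0..<length w] = w \<longleftrightarrow> (\<forall>i<length w. x i = w ! i)"
proof -
  have "map x [0..<length w] = map ((!) w) [0..<length w] \<longleftrightarrow> (\<forall>i<length w. x i = w ! i)"
    by (auto simp: map_eq_conv)
  then show ?thesis by (simp only: map_nth)
qed

lemma vimage_cylinder_in_sets:
  assumes "Y \<in> space M \<rightarrow> Omega m"
    and "\<And>i a. {\<omega> \<in> space M. Y \<omega> i = a} \<in> sets M"
  shows "Y -` cylinder m w \<inter> space M \<in> sets M"
proof -
  have "Y -` cylinder m w \<inter> space M = {\<omega> \<in> space M. \<forall>i\<in>{..<length w}. Y \<omega> i = w ! i}"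
    using assms(1) by (auto simp: cylinder_def map_upt_length_eq_iff)
  also have "\<dots> \<in> sets M"
    using assms(2) by (intro sets.sets_Collect_finite_All) auto
  finally show ?thesis .
qed

text \<open>Every open set is the union of the countably many cylinders it contains.\<close>
lemma measurable_Omega_borelI:
  assumes Y: "Y \<in> space M \<rightarrow> Omega m"
    and coord: "\<And>i a. {\<omega> \<in> space M. Y \<omega> i = a} \<in> sets M"
  shows "Y \<in> measurable M (Omega_borel m)"
  unfolding Omega_borel_def
proof (rule measurable_measure_of[OF Omega_open_subset Y])
  fix U assume "U \<in> {U. Omega_open m U}"
  then have U: "Omega_open m U" by simp
  have "Y -` U \<inter> space M = (\<Union>w\<in>{w. cylinder m w \<subseteq> U}. Y -` cylinder m w \<inter> space M)"
  proof (intro equalityI subsetI)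
    fix \<omega> assume \<omega>: "\<omega> \<in> Y -` U \<inter> space M"
    then obtain e where "e > 0" and e: "\<forall>y\<in>Omega m. d_Omega (Y \<omega>) y < e \<longrightarrow> y \<in> U"
      using U unfolding Omega_open_def by blast
    then obtain L where L: "(1/2::real) ^ L < e"
      using real_arch_pow_inv[of e "1/2"] by auto
    have "cylinder m (map (Y \<omega>) [0..<L]) \<subseteq> U"
    proof
      fix y assume "y \<in> cylinder m (map (Y \<omega>) [0..<L])"
      then have "y \<in> Omega m" and "\<forall>i<L. Y \<omega> i = y i"
        by (auto simp: cylinder_def map_eq_conv)
      then have "y \<in> Omega m" and "d_Omega (Y \<omega>) y \<le> (1/2) ^ L"
        by (auto intro: d_Omega_le_if_agree)
      then show "y \<in> U" using e L by auto
    qed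
    moreover have "\<omega> \<in> Y -` cylinder m (map (Y \<omega>) [0..<L]) \<inter> space M"
      using \<omega> Y by (auto simp: cylinder_def)
    ultimately show "\<omega> \<in> (\<Union>w\<in>{w. cylinder m w \<subseteq> U}. Y -` cylinder m w \<inter> space M)"
      by blast
  qed auto
  also have "\<dots> \<in> sets M"
    by (intro sets.countable_UN'') (auto intro: vimage_cylinder_in_sets[OF Y coord])
  finally show "Y -` U \<inter> space M \<in> sets M" .
qed

lemma cylinder_in_sets: "cylinder m w \<in> sets (Omega_borel m)"
proof -
  have "id -` cylinder m w \<inter> space (Omega_borel m) \<in> sets (Omega_borel m)"
    by (rule vimage_cylinder_in_sets) (use coordinate_set_in_sets in \<open>auto simp: cylinder_def\<close>)
  moreover have "id -` cylinder m w \<inter> space (Omega_borel m) = cylinder m w"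
    by (auto simp: cylinder_def)
  ultimately show ?thesis by simp
qed

lemma shift_measurable: "shift \<in> measurable (Omega_borel m) (Omega_borel m)"
proof (rule measurable_Omega_borelI)
  fix i a
  have "{x \<in> space (Omega_borel m). shift x i = a} = {x \<in> Omega m. x (Suc i) = a}"
    by (auto simp: shift_def)
  then show "{x \<in> space (Omega_borel m). shift x i = a} \<in> sets (Omega_borel m)"
    using coordinate_set_in_sets by simp
qed (auto simp: shift_def Omega_def)

section \<open>Cylinder probabilities control the Monge-Kantorovich distance\<close>

lemma Prob_OmegaD:
  assumes "\<nu> \<in> Prob_Omega m"
  shows "prob_space \<nu>" "sets \<nu> = sets (Omega_borel m)" "space \<nu> = Omega m"
  using assms sets_eq_imp_space_eq[of \<nu> "Omega_borel m"] by (auto simp: Prob_Omega_def)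

definition words :: "nat \<Rightarrow> nat \<Rightarrow> nat list set" where
  "words m L = {w. set w \<subseteq> {1..m} \<and> length w = L}"

definition pad_word :: "nat list \<Rightarrow> nat \<Rightarrow> nat" where
  "pad_word w i = (if i < length w then w ! i else 1)"

lemma finite_words: "finite (words m L)"
  unfolding words_def by (rule finite_lists_length_eq) simp

lemma prefix_in_words: "x \<in> Omega m \<Longrightarrow> map x [0..<L] \<in> words m L"
  by (auto simp: words_def Omega_def)

lemma mem_cylinder_iff:
  "w \<in> words m L \<Longrightarrow> x \<in> cylinder m w \<longleftrightarrow> x \<in> Omega m \<and> map x [0..<L] = w"
  by (auto simp: cylinder_def words_def)

lemma pad_word_in_Omega:
  assumes "m \<ge> 1" "set w \<subseteq> {1..m}"
  shows "pad_word w \<in> Omega m"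
proof -
  have "w ! i \<in> {1..m}" if "i < length w" for i
    using assms(2) nth_mem[OF that] by blast
  then have "pad_word w i \<in> {1..m}" for i
    using assms(1) by (simp add: pad_word_def)
  then show ?thesis by (simp add: Omega_def)
qed

lemma d_Omega_pad_prefix_le: "d_Omega x (pad_word (map x [0..<L])) \<le> (1/2) ^ L"
  by (rule d_Omega_le_if_agree) (simp add: pad_word_def)

lemma sum_words_indicator_cylinder:
  assumes "x \<in> Omega m"
  shows "(\<Sum>w\<in>words m L. indicator (cylinder m w) x * F w) = (F (map x [0..<L]) :: real)"
proof -
  have "(\<Sum>w\<in>words m L. indicator (cylinder m w) x * F w) =
        (\<Sum>w\<in>words m L. if map x [0..<L] = w then F w else 0)"
    using assms by (intro sum.cong refl) (simp add: mem_cylinder_iff)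
  also have "\<dots> = F (map x [0..<L])"
    using prefix_in_words[OF assms] finite_words by simp
  finally show ?thesis .
qed

lemma prefix_function_measurable:
  "(\<lambda>x. F (map x [0..<L]) :: real) \<in> borel_measurable (Omega_borel m)"
proof -
  have "(\<lambda>x. \<Sum>w\<in>words m L. indicator (cylinder m w) x * F w) \<in> borel_measurable (Omega_borel m)"
    using cylinder_in_sets by measurable
  then show ?thesis
    by (rule measurable_cong[THEN iffD1, rotated]) (simp add: sum_words_indicator_cylinder)
qed

lemma integral_prefix_function:
  assumes "\<nu> \<in> Prob_Omega m"
  shows "(\<integral>x. F (map x [0..<L]) \<partial>\<nu>) = (\<Sum>w\<in>words m L. measure \<nu> (cylinder m w) * F w)"
proof -
  interpret prob_space \<nu> using Prob_OmegaD[OF assms] by simp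
  have cyl: "cylinder m w \<in> sets \<nu>" for w using cylinder_in_sets Prob_OmegaD[OF assms] by simp
  have integrable: "integrable \<nu> (indicator (cylinder m w) :: _ \<Rightarrow> real)" for w
    using cyl by (intro integrable_real_indicator) (auto simp: less_top[symmetric])
  have "(\<integral>x. F (map x [0..<L]) \<partial>\<nu>) =
        (\<integral>x. (\<Sum>w\<in>words m L. indicator (cylinder m w) x * F w) \<partial>\<nu>)"
    by (rule Bochner_Integration.integral_cong)
      (simp_all add: Prob_OmegaD[OF assms] sum_words_indicator_cylinder)
  also have "\<dots> = (\<Sum>w\<in>words m L. measure \<nu> (cylinder m w) * F w)"
    using cyl integrable by (subst Bochner_Integration.integral_sum) auto
  finally show ?thesis .
qed

lemma sum_measure_cylinders:
  assumes "\<nu> \<in> Prob_Omega m"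
  shows "(\<Sum>w\<in>words m L. measure \<nu> (cylinder m w)) = 1"
proof -
  interpret prob_space \<nu> using Prob_OmegaD[OF assms] by simp
  show ?thesis using integral_prefix_function[OF assms, of "\<lambda>_. 1" L] prob_space by simp
qed

lemma lip1_pad_prefix:
  assumes "m \<ge> 1" "lip1 m f" "x \<in> Omega m"
  shows "\<bar>f x - f (pad_word (map x [0..<L]))\<bar> \<le> (1/2) ^ L"
proof -
  have "pad_word (map x [0..<L]) \<in> Omega m"
    using assms prefix_in_words[of x m L] by (intro pad_word_in_Omega) (auto simp: words_def)
  then have "\<bar>f x - f (pad_word (map x [0..<L]))\<bar> \<le> d_Omega x (pad_word (map x [0..<L]))"
    using assms unfolding lip1_def by blast
  also have "\<dots> \<le> (1/2) ^ L" by (rule d_Omega_pad_prefix_le)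
  finally show ?thesis .
qed

lemma lip1_oscillation_le_1:
  "lip1 m f \<Longrightarrow> x \<in> Omega m \<Longrightarrow> y \<in> Omega m \<Longrightarrow> \<bar>f x - f y\<bar> \<le> 1"
  unfolding lip1_def using d_Omega_le_1 order_trans by blast

lemma lip1_borel_measurable:
  assumes "m \<ge> 1" "lip1 m f"
  shows "f \<in> borel_measurable (Omega_borel m)"
proof (rule borel_measurable_LIMSEQ_real)
  show "(\<lambda>x. f (pad_word (map x [0..<L]))) \<in> borel_measurable (Omega_borel m)" for L
    by (rule prefix_function_measurable)
next
  fix x assume "x \<in> space (Omega_borel m)"
  then have "norm (f (pad_word (map x [0..<L])) - f x) \<le> (1/2) ^ L" for L
    using lip1_pad_prefix[OF assms, of x L] by simp
  then have "(\<lambda>L. f (pad_word (map x [0..<L])) - f x) \<longlonglongrightarrow> 0"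
    by (intro Lim_null_comparison[OF always_eventually LIMSEQ_power_zero]) auto
  then show "(\<lambda>L. f (pad_word (map x [0..<L]))) \<longlonglongrightarrow> f x"
    by (simp add: LIM_zero_iff)
qed

lemma integrable_bounded_Prob_Omega:
  fixes h :: "(nat \<Rightarrow> nat) \<Rightarrow> real"
  assumes "\<nu> \<in> Prob_Omega m" "h \<in> borel_measurable (Omega_borel m)"
    and "\<And>x. x \<in> Omega m \<Longrightarrow> \<bar>h x\<bar> \<le> B"
  shows "integrable \<nu> h"
proof -
  note \<nu> = Prob_OmegaD[OF assms(1)]
  interpret prob_space \<nu> by (rule \<nu>(1))
  show ?thesis
    using assms(2,3) measurable_cong_sets[OF \<nu>(2) refl] \<nu>(3)
    by (intro integrable_const_bound[where B = B]) auto
qed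

lemma (in prob_space) abs_integral_diff_le:
  fixes f g :: "'a \<Rightarrow> real"
  assumes "integrable M f" "integrable M g" "\<And>x. x \<in> space M \<Longrightarrow> \<bar>f x - g x\<bar> \<le> B"
  shows "\<bar>integral\<^sup>L M f - integral\<^sup>L M g\<bar> \<le> B"
proof -
  have "\<bar>integral\<^sup>L M f - integral\<^sup>L M g\<bar> = \<bar>\<integral>x. f x - g x \<partial>M\<bar>"
    using assms by simp
  also have "\<dots> \<le> (\<integral>x. \<bar>f x - g x\<bar> \<partial>M)"
    by (rule integral_abs_bound)
  also have "\<dots> \<le> B"
    using assms by (intro integral_le_const) auto
  finally show ?thesis .
qed

lemma integral_lip1_pad_prefix:
  assumes "m \<ge> 1" "lip1 m f" "\<nu> \<in> Prob_Omega m"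
  shows "\<bar>(\<integral>x. f x \<partial>\<nu>) - (\<integral>x. f (pad_word (map x [0..<L])) \<partial>\<nu>)\<bar> \<le> (1/2) ^ L"
proof -
  interpret prob_space \<nu> using Prob_OmegaD[OF assms(3)] by simp
  have "\<bar>f x\<bar> \<le> \<bar>f (\<lambda>_. 1)\<bar> + 1" if "x \<in> Omega m" for x
    using lip1_oscillation_le_1[OF assms(2) that, of "\<lambda>_. 1"] assms(1) by (simp add: Omega_def)
  moreover have "pad_word (map x [0..<L]) \<in> Omega m" if "x \<in> Omega m" for x
    using assms(1) prefix_in_words[OF that] by (intro pad_word_in_Omega) (auto simp: words_def)
  ultimately have "integrable \<nu> f" "integrable \<nu> (\<lambda>x. f (pad_word (map x [0..<L])))"
    using lip1_borel_measurable[OF assms(1,2)]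
    by (auto intro!: integrable_bounded_Prob_Omega[OF assms(3)] prefix_function_measurable)
  then show ?thesis
    using lip1_pad_prefix[OF assms(1,2)] by (intro abs_integral_diff_le) (auto simp: Prob_OmegaD[OF assms(3)])
qed

text \<open>Centering \<open>F\<close> at \<open>c\<close> is free because the two weight vectors have the same total.\<close>
lemma weighted_sum_diff_le:
  fixes a b F :: "'a \<Rightarrow> real"
  assumes "(\<Sum>w\<in>W. a w) = (\<Sum>w\<in>W. b w)" "\<And>w. w \<in> W \<Longrightarrow> \<bar>F w - c\<bar> \<le> 1"
  shows "(\<Sum>w\<in>W. a w * F w) - (\<Sum>w\<in>W. b w * F w) \<le> (\<Sum>w\<in>W. \<bar>a w - b w\<bar>)"
proof -
  have "(\<Sum>w\<in>W. (a w - b w) * (F w - c)) =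
        (\<Sum>w\<in>W. a w * F w) - (\<Sum>w\<in>W. b w * F w) - c * ((\<Sum>w\<in>W. a w) - (\<Sum>w\<in>W. b w))"
    by (simp add: left_diff_distrib right_diff_distrib sum_subtractf sum_distrib_left mult.commute)
  then have "(\<Sum>w\<in>W. a w * F w) - (\<Sum>w\<in>W. b w * F w) = (\<Sum>w\<in>W. (a w - b w) * (F w - c))"
    using assms(1) by simp
  also have "\<dots> \<le> (\<Sum>w\<in>W. \<bar>a w - b w\<bar>)"
  proof (rule sum_mono)
    fix w assume "w \<in> W"
    then have "\<bar>(a w - b w) * (F w - c)\<bar> \<le> \<bar>a w - b w\<bar> * 1"
      unfolding abs_mult using assms(2) by (intro mult_left_mono) auto
    then show "(a w - b w) * (F w - c) \<le> \<bar>a w - b w\<bar>" by simp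
  qed
  finally show ?thesis .
qed

lemma lip1_integral_diff_le:
  assumes "m \<ge> 1" "lip1 m f" "\<rho> \<in> Prob_Omega m" "\<nu> \<in> Prob_Omega m"
  shows "(\<integral>x. f x \<partial>\<rho>) - (\<integral>x. f x \<partial>\<nu>) \<le>
    2 * (1/2) ^ L + (\<Sum>w\<in>words m L. \<bar>measure \<rho> (cylinder m w) - measure \<nu> (cylinder m w)\<bar>)"
proof -
  let ?g = "\<lambda>x. f (pad_word (map x [0..<L]))"
  have "(\<integral>x. ?g x \<partial>\<rho>) - (\<integral>x. ?g x \<partial>\<nu>) =
        (\<Sum>w\<in>words m L. measure \<rho> (cylinder m w) * f (pad_word w)) -
        (\<Sum>w\<in>words m L. measure \<nu> (cylinder m w) * f (pad_word w))"
    using integral_prefix_function[OF assms(3), of "\<lambda>w. f (pad_word w)" L]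
      integral_prefix_function[OF assms(4), of "\<lambda>w. f (pad_word w)" L]
    by (simp only:)
  also have "\<dots> \<le> (\<Sum>w\<in>words m L. \<bar>measure \<rho> (cylinder m w) - measure \<nu> (cylinder m w)\<bar>)"
  proof (rule weighted_sum_diff_le)
    show "(\<Sum>w\<in>words m L. measure \<rho> (cylinder m w)) = (\<Sum>w\<in>words m L. measure \<nu> (cylinder m w))"
      using assms(3,4) by (simp add: sum_measure_cylinders)
    show "\<bar>f (pad_word w) - f (\<lambda>_. 1)\<bar> \<le> 1" if "w \<in> words m L" for w
    proof (rule lip1_oscillation_le_1[OF assms(2)])
      show "pad_word w \<in> Omega m"
        using assms(1) that by (intro pad_word_in_Omega) (auto simp: words_def)
      show "(\<lambda>_. 1) \<in> Omega m"
        using assms(1) by (simp add: Omega_def)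
    qed
  qed
  moreover have "\<bar>(\<integral>x. f x \<partial>\<rho>) - (\<integral>x. ?g x \<partial>\<rho>)\<bar> \<le> (1/2) ^ L"
    and "\<bar>(\<integral>x. f x \<partial>\<nu>) - (\<integral>x. ?g x \<partial>\<nu>)\<bar> \<le> (1/2) ^ L"
    using assms by (simp_all add: integral_lip1_pad_prefix)
  ultimately show ?thesis by linarith
qed

lemma d_MK_le_cylinder_distance:
  assumes "m \<ge> 1" "\<rho> \<in> Prob_Omega m" "\<nu> \<in> Prob_Omega m"
  shows "d_MK m \<rho> \<nu> \<le>
    2 * (1/2) ^ L + (\<Sum>w\<in>words m L. \<bar>measure \<rho> (cylinder m w) - measure \<nu> (cylinder m w)\<bar>)"
  unfolding d_MK_def
proof (rule cSup_least)
  have "lip1 m (\<lambda>_. 0)" by (simp add: lip1_def d_Omega_nonneg)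
  then show "{(\<integral>x. f x \<partial>\<rho>) - (\<integral>x. f x \<partial>\<nu>) | f. lip1 m f} \<noteq> {}" by blast
next
  fix s assume "s \<in> {(\<integral>x. f x \<partial>\<rho>) - (\<integral>x. f x \<partial>\<nu>) | f. lip1 m f}"
  then obtain f where "lip1 m f" and "s = (\<integral>x. f x \<partial>\<rho>) - (\<integral>x. f x \<partial>\<nu>)"
    by blast
  then show "s \<le> 2 * (1/2) ^ L +
      (\<Sum>w\<in>words m L. \<bar>measure \<rho> (cylinder m w) - measure \<nu> (cylinder m w)\<bar>)"
    using lip1_integral_diff_le[OF assms(1) _ assms(2,3)] by simp
qed

section \<open>Rational approximation of probability vectors\<close>

lemma sum_abs_normalized_diff_le:
  fixes c p :: "'a \<Rightarrow> real"
  assumes c: "\<And>w. w \<in> W \<Longrightarrow> 0 \<le> c w" "\<And>w. w \<in> W \<Longrightarrow> c w \<le> K * p w"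
    and p: "(\<Sum>w\<in>W. p w) = 1" and S: "0 < (\<Sum>w\<in>W. c w)"
  shows "(\<Sum>w\<in>W. \<bar>c w / (\<Sum>w\<in>W. c w) - p w\<bar>) \<le> 2 * (K - (\<Sum>w\<in>W. c w)) / K"
proof -
  define S where "S = (\<Sum>w\<in>W. c w)"
  have "S \<le> (\<Sum>w\<in>W. K * p w)"
    unfolding S_def using c(2) by (rule sum_mono)
  then have SK: "S \<le> K"
    using p by (simp add: sum_distrib_left[symmetric])
  have S0: "0 < S" using S by (simp add: S_def)
  have "\<bar>c w / S - p w\<bar> \<le> (c w / S - c w / K) + (p w - c w / K)" if "w \<in> W" for w
  proof -
    have "c w / K \<le> c w / S"
      using SK S0 c(1)[OF that] by (intro divide_left_mono) auto
    moreover have "c w / K \<le> p w"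
      using c(2)[OF that] S0 SK by (simp add: divide_le_eq mult.commute)
    ultimately show ?thesis by linarith
  qed
  then have "(\<Sum>w\<in>W. \<bar>c w / S - p w\<bar>) \<le> (\<Sum>w\<in>W. (c w / S - c w / K) + (p w - c w / K))"
    by (rule sum_mono)
  also have "\<dots> = S / S - 2 * (S / K) + 1"
    using p by (simp add: S_def sum.distrib sum_subtractf sum_divide_distrib[symmetric]
        sum_distrib_left[symmetric])
  also have "\<dots> = 2 * (K - S) / K"
    using S0 SK by (simp add: field_simps)
  finally show ?thesis by (simp add: S_def)
qed

lemma exists_nat_weights_approx:
  fixes p :: "'a \<Rightarrow> real"
  assumes W: "finite W" "W \<noteq> {}" and p: "\<And>w. w \<in> W \<Longrightarrow> 0 \<le> p w" "(\<Sum>w\<in>W. p w) = 1"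
    and "\<epsilon> > 0"
  shows "\<exists>c :: 'a \<Rightarrow> nat. 0 < (\<Sum>w\<in>W. c w) \<and>
           (\<Sum>w\<in>W. \<bar>real (c w) / real (\<Sum>w\<in>W. c w) - p w\<bar>) \<le> \<epsilon>"
proof -
  define N where "N = real (card W)"
  have N: "N \<ge> 1" using W by (simp add: N_def Suc_le_eq card_gt_0_iff)
  obtain K :: nat where K: "max (2 * N / \<epsilon>) N < K"
    using reals_Archimedean2 by blast
  define c where "c w = nat \<lfloor>K * p w\<rfloor>" for w
  have c: "real (c w) = \<lfloor>K * p w\<rfloor>" if "w \<in> W" for w
    using p(1)[OF that] by (simp add: c_def)
  define S where "S = real (\<Sum>w\<in>W. c w)"
  have "(\<Sum>w\<in>W. K * p w - 1) < S"
    unfolding S_def of_nat_sum using W c by (intro sum_strict_mono) auto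
  moreover have "(\<Sum>w\<in>W. K * p w - 1) = K - N"
    using p(2) by (simp add: sum_subtractf sum_distrib_left[symmetric] N_def)
  ultimately have SKN: "K - N < S" by simp
  then have "0 < S" using K by linarith
  then have "(\<Sum>w\<in>W. \<bar>real (c w) / S - p w\<bar>) \<le> 2 * (K - S) / K"
    unfolding S_def of_nat_sum using c p
    by (intro sum_abs_normalized_diff_le) auto
  also have "\<dots> \<le> 2 * N / K"
    using SKN K N by (intro divide_right_mono) auto
  also have "\<dots> \<le> \<epsilon>"
    using K N \<open>\<epsilon> > 0\<close> by (simp add: field_simps)
  finally have "(\<Sum>w\<in>W. \<bar>real (c w) / S - p w\<bar>) \<le> \<epsilon>" .
  moreover have "0 < (\<Sum>w\<in>W. c w)"
    using \<open>0 < S\<close> unfolding S_def by (simp only: of_nat_0_less_iff)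
  ultimately show ?thesis unfolding S_def by blast
qed

section \<open>A measure built from independent blocks\<close>

text \<open>Every list of words \<open>ws\<close> is the target of all blocks \<open>k = prod_encode (to_nat ws, j)\<close>,
  and \<open>j \<le> k\<close>: so a block carrying \<open>ws\<close> can be found arbitrarily late, hence arbitrarily long.\<close>
definition block_target :: "nat \<Rightarrow> nat list list" where
  "block_target k = from_nat (fst (prod_decode k))"

definition block_pmf :: "nat \<Rightarrow> nat list pmf" where
  "block_pmf k = (if block_target k = [] then return_pmf []
                  else pmf_of_multiset (mset (block_target k)))"

definition clamp_letter :: "nat \<Rightarrow> nat \<Rightarrow> nat" where
  "clamp_letter m a = (if a \<in> {1..m} then a else 1)"

text \<open>Block \<open>k\<close> occupies the positions \<open>2^k ..< 2^(k+1)\<close> and spells the word \<open>\<omega> k\<close>;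
  letters outside the alphabet, including the unspecified \<open>!\<close>-values beyond the end of a short word, become \<open>1\<close>.\<close>
definition block_sequence :: "nat \<Rightarrow> (nat \<Rightarrow> nat list) \<Rightarrow> nat \<Rightarrow> nat" where
  "block_sequence m \<omega> i =
     (if i = 0 then 1 else clamp_letter m (\<omega> (floor_log i) ! (i - 2 ^ floor_log i)))"

definition block_space :: "(nat \<Rightarrow> nat list) measure" where
  "block_space = PiM UNIV (\<lambda>k. measure_pmf (block_pmf k))"

definition universal_measure :: "nat \<Rightarrow> (nat \<Rightarrow> nat) measure" where
  "universal_measure m = distr block_space (Omega_borel m) (block_sequence m)"

lemma prob_space_block_space: "prob_space block_space"
  unfolding block_space_def by (intro prob_space_PiM prob_space_measure_pmf)

lemma funpow_shift: "(shift ^^ n) x = (\<lambda>i. x (n + i))"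
  by (induction n arbitrary: x) (auto simp: shift_def)

lemma shifted_block_sequence_in_Omega: "m \<ge> 1 \<Longrightarrow> (shift ^^ n) (block_sequence m \<omega>) \<in> Omega m"
  by (auto simp: funpow_shift block_sequence_def Omega_def clamp_letter_def)

lemma shifted_block_sequence_measurable:
  assumes "m \<ge> 1"
  shows "(\<lambda>\<omega>. (shift ^^ n) (block_sequence m \<omega>)) \<in> measurable block_space (Omega_borel m)"
proof (rule measurable_Omega_borelI)
  show "(\<lambda>\<omega>. (shift ^^ n) (block_sequence m \<omega>)) \<in> space block_space \<rightarrow> Omega m"
    using shifted_block_sequence_in_Omega[OF assms] by blast
  fix i a
  let ?j = "n + i"
  let ?letter = "\<lambda>u. if ?j = 0 then 1 else clamp_letter m (u ! (?j - 2 ^ floor_log ?j))"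
  have "(\<lambda>\<omega>. ?letter (\<omega> (floor_log ?j))) \<in> measurable block_space (count_space UNIV)"
    unfolding block_space_def
    by (rule measurable_compose[OF measurable_component_singleton]) auto
  then have "(\<lambda>\<omega>. ?letter (\<omega> (floor_log ?j))) -` {a} \<inter> space block_space \<in> sets block_space"
    by (rule measurable_sets) simp
  moreover have "(\<lambda>\<omega>. ?letter (\<omega> (floor_log ?j))) -` {a} \<inter> space block_space =
      {\<omega> \<in> space block_space. (shift ^^ n) (block_sequence m \<omega>) i = a}"
    by (auto simp: funpow_shift block_sequence_def)
  ultimately show "{\<omega> \<in> space block_space. (shift ^^ n) (block_sequence m \<omega>) i = a} \<in> sets block_space"
    by simp
qed

lemma T_push_iterate_universal_measure:
  assumes "m \<ge> 1"
  shows "(T_push m ^^ n) (universal_measure m) =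
         distr block_space (Omega_borel m) (\<lambda>\<omega>. (shift ^^ n) (block_sequence m \<omega>))"
proof (induction n)
  case (Suc n)
  have "(T_push m ^^ Suc n) (universal_measure m) =
        distr (distr block_space (Omega_borel m) (\<lambda>\<omega>. (shift ^^ n) (block_sequence m \<omega>)))
          (Omega_borel m) shift"
    by (simp add: Suc.IH T_push_def)
  also have "\<dots> =
      distr block_space (Omega_borel m) (shift \<circ> (\<lambda>\<omega>. (shift ^^ n) (block_sequence m \<omega>)))"
    by (rule distr_distr[OF shift_measurable shifted_block_sequence_measurable[OF assms]])
  finally show ?case by (simp add: comp_def)
qed (simp add: universal_measure_def)

lemma T_push_iterate_in_Prob_Omega:
  assumes "m \<ge> 1"
  shows "(T_push m ^^ n) (universal_measure m) \<in> Prob_Omega m"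
  unfolding T_push_iterate_universal_measure[OF assms] Prob_Omega_def
  using prob_space.prob_space_distr[OF prob_space_block_space shifted_block_sequence_measurable[OF assms]]
  by simp

lemma floor_log_block:
  assumes "r < 2 ^ k"
  shows "floor_log (2 ^ k + r) = k"
proof -
  let ?l = "floor_log (2 ^ k + r)"
  have "2 ^ ?l \<le> 2 ^ k + r" and "2 ^ k + r < 2 * 2 ^ ?l"
    by (simp_all add: floor_log_exp2_le floor_log_exp2_gt)
  then have "(2::nat) ^ ?l < 2 ^ Suc k" and "(2::nat) ^ k < 2 ^ Suc ?l"
    using assms by simp_all
  moreover have "(2::nat) ^ a < 2 ^ b \<Longrightarrow> a < b" for a b
    by simp
  ultimately have "?l < Suc k" and "k < Suc ?l"
    by blast+
  then show ?thesis by simp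
qed

lemma shift_block_sequence:
  assumes "r < 2 ^ k"
  shows "(shift ^^ (2 ^ k)) (block_sequence m \<omega>) r = clamp_letter m (\<omega> k ! r)"
  using assms floor_log_block[OF assms] by (simp add: funpow_shift block_sequence_def)

lemma clamp_letter_word:
  assumes "u \<in> words m L"
  shows "map (\<lambda>r. clamp_letter m (u ! r)) [0..<L] = u"
  using assms map_upt_length_eq_iff[of "\<lambda>r. clamp_letter m (u ! r)" u] nth_mem[of _ u]
  by (auto simp: words_def clamp_letter_def subset_iff)

lemma measure_cylinder_shifted_block:
  assumes "m \<ge> 1" "L \<le> 2 ^ k" "set_pmf (block_pmf k) \<subseteq> words m L" "w \<in> words m L"
  shows "measure ((T_push m ^^ 2 ^ k) (universal_measure m)) (cylinder m w) = pmf (block_pmf k) w"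
proof -
  let ?Y = "\<lambda>\<omega>. (shift ^^ 2 ^ k) (block_sequence m \<omega>)"
  let ?A = "{u. map (\<lambda>r. clamp_letter m (u ! r)) [0..<L] = w}"
  have map_eq: "map (?Y \<omega>) [0..<L] = map (\<lambda>r. clamp_letter m (\<omega> k ! r)) [0..<L]" for \<omega>
    using assms(2) by (intro map_cong refl shift_block_sequence) auto
  have "?Y \<omega> \<in> cylinder m w \<longleftrightarrow> \<omega> k \<in> ?A" for \<omega>
    unfolding mem_cylinder_iff[OF assms(4)] map_eq
    using shifted_block_sequence_in_Omega[OF assms(1)] by simp
  then have vimage:
      "?Y -` cylinder m w \<inter> space block_space = (\<lambda>\<omega>. \<omega> k) -` ?A \<inter> space block_space"
    by blast
  have component: "distr block_space (block_pmf k) (\<lambda>\<omega>. \<omega> k) = block_pmf k"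
    unfolding block_space_def by (rule distr_PiM_component) (auto intro: prob_space_measure_pmf)
  have "u \<in> ?A \<longleftrightarrow> u = w" if "u \<in> set_pmf (block_pmf k)" for u
    using clamp_letter_word[of u m L] assms(3) that by auto
  then have clamp: "?A \<inter> set_pmf (block_pmf k) = {w} \<inter> set_pmf (block_pmf k)"
    by blast
  have "measure ((T_push m ^^ 2 ^ k) (universal_measure m)) (cylinder m w) =
      measure block_space (?Y -` cylinder m w \<inter> space block_space)"
    unfolding T_push_iterate_universal_measure[OF assms(1)]
    by (rule measure_distr[OF shifted_block_sequence_measurable[OF assms(1)] cylinder_in_sets])
  also have "\<dots> = measure block_space ((\<lambda>\<omega>. \<omega> k) -` ?A \<inter> space block_space)"
    by (simp only: vimage)
  also have "\<dots> = measure (distr block_space (block_pmf k) (\<lambda>\<omega>. \<omega> k)) ?A"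
    by (rule measure_distr[symmetric]) (auto simp: block_space_def)
  also have "\<dots> = measure (block_pmf k) (?A \<inter> set_pmf (block_pmf k))"
    by (simp only: component measure_Int_set_pmf)
  also have "\<dots> = pmf (block_pmf k) w"
    by (simp only: clamp measure_Int_set_pmf measure_pmf_single)
  finally show ?thesis .
qed

lemma exists_block_pmf:
  fixes c :: "nat list \<Rightarrow> nat"
  assumes "finite W" "0 < (\<Sum>w\<in>W. c w)"
  shows "\<exists>k\<ge>j. set_pmf (block_pmf k) \<subseteq> W \<and>
           (\<forall>w\<in>W. pmf (block_pmf k) w = real (c w) / real (\<Sum>w\<in>W. c w))"
proof -
  define M where "M = (\<Sum>w\<in>W. replicate_mset (c w) w)"
  obtain ws where ws: "mset ws = M"
    using ex_mset by blast
  define k where "k = prod_encode (to_nat ws, j)"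
  have "j \<le> k"
    unfolding k_def by (rule le_prod_encode_2)
  have size: "size M = (\<Sum>w\<in>W. c w)"
    by (simp add: M_def)
  have count: "count M w = c w" if "w \<in> W" for w
    using that assms(1) by (simp add: M_def count_sum)
  have "M \<noteq> {#}"
    using size assms(2) by auto
  then have "ws \<noteq> []"
    using ws by auto
  then have block: "block_pmf k = pmf_of_multiset M"
    by (simp add: block_pmf_def block_target_def k_def ws)
  have "set_pmf (block_pmf k) = set_mset M"
    by (simp add: block set_pmf_of_multiset[OF \<open>M \<noteq> {#}\<close>])
  also have "\<dots> \<subseteq> W"
    by (auto simp: M_def set_mset_sum[OF assms(1)])
  finally have "set_pmf (block_pmf k) \<subseteq> W" .
  moreover have "\<forall>w\<in>W. pmf (block_pmf k) w = real (c w) / real (\<Sum>w\<in>W. c w)"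
    by (simp add: block pmf_of_multiset[OF \<open>M \<noteq> {#}\<close>] count size)
  ultimately show ?thesis
    using \<open>j \<le> k\<close> by blast
qed

lemma universal_measure_approximates_cylinders:
  assumes "m \<ge> 1" "\<nu> \<in> Prob_Omega m" "\<epsilon> > 0"
  shows "\<exists>n. (\<Sum>w\<in>words m L.
    \<bar>measure ((T_push m ^^ n) (universal_measure m)) (cylinder m w) - measure \<nu> (cylinder m w)\<bar>) \<le> \<epsilon>"
proof -
  let ?W = "words m L"
  have "replicate L 1 \<in> ?W"
    using assms(1) by (auto simp: words_def)
  then obtain c :: "nat list \<Rightarrow> nat" where c: "0 < (\<Sum>w\<in>?W. c w)"
    "(\<Sum>w\<in>?W. \<bar>real (c w) / real (\<Sum>w\<in>?W. c w) - measure \<nu> (cylinder m w)\<bar>) \<le> \<epsilon>"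
    using exists_nat_weights_approx[OF finite_words _ _ sum_measure_cylinders[OF assms(2)] assms(3)]
    by auto
  then obtain k where "L \<le> k" and support: "set_pmf (block_pmf k) \<subseteq> ?W"
    and pmf: "\<forall>w\<in>?W. pmf (block_pmf k) w = real (c w) / real (\<Sum>w\<in>?W. c w)"
    using exists_block_pmf[OF finite_words c(1)] by blast
  then have "L \<le> 2 ^ k"
    using less_exp[of k] by linarith
  then have "measure ((T_push m ^^ 2 ^ k) (universal_measure m)) (cylinder m w) =
      real (c w) / real (\<Sum>w\<in>?W. c w)" if "w \<in> ?W" for w
    using measure_cylinder_shifted_block[OF assms(1) _ support that] pmf that by simp
  then have "(\<Sum>w\<in>?W. \<bar>measure ((T_push m ^^ 2 ^ k) (universal_measure m)) (cylinder m w) -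
      measure \<nu> (cylinder m w)\<bar>) \<le> \<epsilon>"
    using c(2) by (simp cong: sum.cong)
  then show ?thesis ..
qed

theorem corollary2p9:
  fixes m :: nat
  assumes "m \<ge> 1"
  shows "\<exists>\<mu>\<in>Prob_Omega m. \<forall>\<nu>\<in>Prob_Omega m. \<forall>e>0.
           \<exists>n. d_MK m ((T_push m ^^ n) \<mu>) \<nu> < e"
proof (intro bexI ballI allI impI)
  show "universal_measure m \<in> Prob_Omega m"
    using T_push_iterate_in_Prob_Omega[OF assms, of 0] by simp
  fix \<nu> and e :: real
  assume \<nu>: "\<nu> \<in> Prob_Omega m" and "e > 0"
  obtain L where L: "(1/2::real) ^ L < e / 4"
    using real_arch_pow_inv[of "e / 4" "1/2"] \<open>e > 0\<close> by auto
  obtain n where n: "(\<Sum>w\<in>words m L. \<bar>measure ((T_push m ^^ n) (universal_measure m)) (cylinder m w) -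
      measure \<nu> (cylinder m w)\<bar>) \<le> e / 4"
    using universal_measure_approximates_cylinders[OF assms \<nu>, of "e / 4"] \<open>e > 0\<close> by auto
  have "d_MK m ((T_push m ^^ n) (universal_measure m)) \<nu> \<le> 2 * (1/2) ^ L + e / 4"
    using d_MK_le_cylinder_distance[OF assms T_push_iterate_in_Prob_Omega[OF assms, of n] \<nu>, of L] n
    by linarith
  also have "\<dots> < e"
    using L \<open>e > 0\<close> by linarith
  finally show "\<exists>n. d_MK m ((T_push m ^^ n) (universal_measure m)) \<nu> < e" ..
qed

end
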